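(* The matrix $J^{-1}(s^* )$ satisfies $|J^{-1}_{11}(s^* )|\ge\frac13$, and $J^{-1}_{ii}(s^* )<0$ for all $i=1,\dots,b$.
   Context: Let $N\ge1$, $\gamma\in(0,1]$, $\alpha>0$, $\lambda=1-\gamma/N^\alpha$, and $b\ge1$ an integer. The mean-field vector field is $f_k(s)=\lambda(s_{k-1}^2-s_k^2)-(s_k-s_{k+1})$, $k=1,\dots,b$, with $s_0=1,s_{b+1}=0$; $s^*$ is its unique equilibrium in $\{s\in\mathbb R^b:1\ge s_1\ge\cdots\ge s_b\ge0\}$. $J(s^* )$ is the $b\times b$ tridiagonal Jacobian of $f$ at $s^*$ with $J_{kk}=-2\lambda s^*_k-1$, $J_{k,k+1}=1$, $J_{k+1,k}=2\lambda s^*_k$; it is invertible. *)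

theory Defs
  imports "Jordan_Normal_Form.Matrix"
begin

text \<open>A state is a function s :: nat => real, of which only the entries s 1, ..., s b matter.
  The boundary convention s_0 = 1, s_(b+1) = 0 is built in by sext.\<close>
definition sext :: "nat \<Rightarrow> (nat \<Rightarrow> real) \<Rightarrow> nat \<Rightarrow> real" where
  "sext b s k = (if k = 0 then 1 else if k = b + 1 then 0 else s k)"

definition mf_field :: "real \<Rightarrow> nat \<Rightarrow> (nat \<Rightarrow> real) \<Rightarrow> nat \<Rightarrow> real" where
  "mf_field lam b s k =
     lam * ((sext b s (k - 1))\<^sup>2 - (sext b s k)\<^sup>2) - (sext b s k - sext b s (k + 1))"

text \<open>Jacobian of f at s, as a b x b matrix; the 0-based matrix index i corresponds
  to the 1-based index k = i + 1 of the paper.\<close>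
definition jac :: "real \<Rightarrow> nat \<Rightarrow> (nat \<Rightarrow> real) \<Rightarrow> real mat" where
  "jac lam b s = mat b b (\<lambda>(i, j).
      if i = j then - 2 * lam * s (i + 1) - 1
      else if j = i + 1 then 1
      else if i = j + 1 then 2 * lam * s (j + 1)
      else 0)"

end

theory Submission
  imports Defs
begin

text \<open>With a_j = 2 lam s_(j+1) \<ge> 0 the Jacobian is tridiagonal, and each row u of J^-1 satisfies
  u_(j-1) - (1 + a_j) u_j + a_j u_(j+1) = \<delta>_ij \<ge> 0. A discrete maximum principle gives u \<le> 0,
  so every entry of J^-1 is nonpositive, and the diagonal equation then yields
  (1 + a_i) (-J^-1_ii) \<ge> 1. Since a_1 = 2 lam s_1 < 2, this gives |J^-1_11| > 1/3.
  Only 0 \<le> lam < 1, 1 \<ge> s_1 \<ge> ... \<ge> s_b \<ge> 0 and the left-inverse identity are needed.\<close>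

lemma antitone_ge_last:
  fixes s :: "nat \<Rightarrow> real"
  assumes "\<forall>k. 1 \<le> k \<and> k < b \<longrightarrow> s (k + 1) \<le> s k" and "1 \<le> k" and "k \<le> b"
  shows "s b \<le> s k"
  using assms(3,2)
proof (induction rule: inc_induct)
  case (step n)
  then show ?case using assms(1) by force
qed simp

lemma mult_jac_index:
  assumes "M \<in> carrier_mat n b" and "i < n" and "j < b"
  shows "(M * jac lam b s) $$ (i, j) =
      (if 0 < j then M $$ (i, j - 1) else 0) - (1 + 2 * lam * s (j + 1)) * M $$ (i, j)
      + (if j + 1 < b then 2 * lam * s (j + 1) * M $$ (i, j + 1) else 0)"
proof -
  have "(M * jac lam b s) $$ (i, j) = (\<Sum>k<b. M $$ (i, k) * jac lam b s $$ (k, j))"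
    using assms by (auto simp: scalar_prod_def jac_def lessThan_atLeast0 intro!: sum.cong)
  also have "\<dots> = (\<Sum>k<b. (if 0 < j \<and> k = j - 1 then M $$ (i, j - 1) else 0)
      + (if k = j then - (1 + 2 * lam * s (j + 1)) * M $$ (i, j) else 0)
      + (if k = j + 1 then 2 * lam * s (j + 1) * M $$ (i, j + 1) else 0))"
    using assms by (intro sum.cong) (auto simp: jac_def)
  also have "\<dots> = (if 0 < j then M $$ (i, j - 1) else 0) - (1 + 2 * lam * s (j + 1)) * M $$ (i, j)
      + (if j + 1 < b then 2 * lam * s (j + 1) * M $$ (i, j + 1) else 0)"
    using assms by (auto simp: sum.distrib algebra_simps)
  finally show ?thesis .
qed

text \<open>Values outside 0..b-1 are read as 0, matching the boundary rows of a tridiagonal matrix.\<close>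
lemma tridiagonal_max_principle:
  fixes u a :: "nat \<Rightarrow> real"
  assumes a_nonneg: "\<forall>j<b. 0 \<le> a j"
    and sub: "\<forall>j<b. 0 \<le> (if 0 < j then u (j - 1) else 0) - (1 + a j) * u j
                      + (if j + 1 < b then a j * u (j + 1) else 0)"
    and "j < b"
  shows "u j \<le> 0"
proof (rule ccontr)
  assume "\<not> u j \<le> 0"
  have "\<exists>m<b. \<forall>k<b. u k \<le> u m"
  proof -
    obtain x where "x \<in> u ` {..<b}" "\<forall>y \<in> u ` {..<b}. y \<le> x"
      using Max_in[of "u ` {..<b}"] Max_ge[of "u ` {..<b}"] \<open>j < b\<close> by blast
    then show ?thesis by auto
  qed
  define m where "m = (LEAST m. m < b \<and> (\<forall>k<b. u k \<le> u m))"
  have m: "m < b" "\<forall>k<b. u k \<le> u m"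
    unfolding m_def using LeastI_ex[OF \<open>\<exists>m<b. \<forall>k<b. u k \<le> u m\<close>] by blast+
  have left: "u (m - 1) < u m" if "0 < m"
  proof -
    have "\<not> (\<forall>k<b. u k \<le> u (m - 1))"
      using not_less_Least[of "m - 1" "\<lambda>m. m < b \<and> (\<forall>k<b. u k \<le> u m)"] m(1) that
      unfolding m_def[symmetric] by auto
    then show ?thesis using m by force
  qed
  have "0 < u m" using m \<open>\<not> u j \<le> 0\<close> \<open>j < b\<close> by force
  have "(if 0 < m then u (m - 1) else 0) < u m"
    using left \<open>0 < u m\<close> by auto
  moreover have "(if m + 1 < b then a m * u (m + 1) else 0) \<le> a m * u m"
    using m a_nonneg \<open>0 < u m\<close> by (auto intro: mult_left_mono)
  moreover have "(1 + a m) * u m = u m + a m * u m"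
    by (simp add: algebra_simps)
  moreover have "0 \<le> (if 0 < m then u (m - 1) else 0) - (1 + a m) * u m
      + (if m + 1 < b then a m * u (m + 1) else 0)"
    using sub m(1) by blast
  ultimately show False by linarith
qed

context
  fixes M :: "real mat" and lam :: real and s :: "nat \<Rightarrow> real" and b :: nat
  assumes M_carrier: "M \<in> carrier_mat b b"
    and left_inverse: "M * jac lam b s = 1\<^sub>m b"
    and weights_nonneg: "\<forall>j<b. 0 \<le> lam * s (j + 1)"
begin

lemma jac_left_inverse_row:
  assumes "i < b" and "j < b"
  shows "(if 0 < j then M $$ (i, j - 1) else 0) - (1 + 2 * lam * s (j + 1)) * M $$ (i, j)
      + (if j + 1 < b then 2 * lam * s (j + 1) * M $$ (i, j + 1) else 0) = (if i = j then 1 else 0)"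
  using mult_jac_index[OF M_carrier assms, of lam s] left_inverse assms by simp

lemma jac_left_inverse_nonpos:
  assumes "i < b" and "j < b"
  shows "M $$ (i, j) \<le> 0"
proof (rule tridiagonal_max_principle[of b "\<lambda>j. 2 * lam * s (j + 1)"])
  show "\<forall>j<b. 0 \<le> 2 * lam * s (j + 1)" using weights_nonneg by simp
  show "\<forall>j<b. 0 \<le> (if 0 < j then M $$ (i, j - 1) else 0) - (1 + 2 * lam * s (j + 1)) * M $$ (i, j)
      + (if j + 1 < b then 2 * lam * s (j + 1) * M $$ (i, j + 1) else 0)"
    using jac_left_inverse_row[OF \<open>i < b\<close>] by simp
qed (fact \<open>j < b\<close>)

lemma jac_left_inverse_diag_bound:
  assumes "i < b"
  shows "1 \<le> (1 + 2 * lam * s (i + 1)) * - M $$ (i, i)"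
proof -
  have "(if 0 < i then M $$ (i, i - 1) else 0) \<le> 0"
    using jac_left_inverse_nonpos assms by auto
  moreover have "(if i + 1 < b then 2 * lam * s (i + 1) * M $$ (i, i + 1) else 0) \<le> 0"
    using jac_left_inverse_nonpos[of i "i + 1"] weights_nonneg assms
    by (auto simp: mult_nonneg_nonpos)
  ultimately show ?thesis
    using jac_left_inverse_row[OF assms assms] by (simp add: algebra_simps)
qed

end

theorem lemma8:
  fixes N b :: nat and \<gamma> \<alpha> lam :: real and s :: "nat \<Rightarrow> real" and Jinv :: "real mat"
  assumes "N \<ge> 1" and "0 < \<gamma>" and "\<gamma> \<le> 1" and "\<alpha> > 0"
    and "lam = 1 - \<gamma> / (real N powr \<alpha>)"
    and "b \<ge> 1"
    and "s 1 \<le> 1" and "\<forall>k. 1 \<le> k \<and> k < b \<longrightarrow> s (k + 1) \<le> s k" and "s b \<ge> 0"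
    and "\<forall>k. 1 \<le> k \<and> k \<le> b \<longrightarrow> mf_field lam b s k = 0"
    and "Jinv \<in> carrier_mat b b"
    and "jac lam b s * Jinv = 1\<^sub>m b" and "Jinv * jac lam b s = 1\<^sub>m b"
  shows "\<bar>Jinv $$ (0, 0)\<bar> \<ge> 1 / 3 \<and> (\<forall>i < b. Jinv $$ (i, i) < 0)"
proof -
  have "1 \<le> real N powr \<alpha>" using assms(1,4) by (simp add: ge_one_powr_ge_zero)
  then have "0 < \<gamma> / real N powr \<alpha>" "\<gamma> / real N powr \<alpha> \<le> 1"
    using assms(1-3) by (auto simp: divide_le_eq intro!: divide_pos_pos)
  then have lam: "0 \<le> lam" "lam < 1" using assms(5) by auto
  have s_nonneg: "0 \<le> s k" if "1 \<le> k" "k \<le> b" for k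
    using antitone_ge_last[OF assms(8) that] assms(9) by linarith
  have weights: "\<forall>j<b. 0 \<le> lam * s (j + 1)"
    using s_nonneg lam by simp
  note nonpos = jac_left_inverse_nonpos[OF assms(11,13) weights]
  note diag = jac_left_inverse_diag_bound[OF assms(11,13) weights]
  have "0 < b" using assms(6) by simp
  have "2 * lam * s 1 < 2"
    using mult_left_mono[OF assms(7) lam(1)] lam(2) by simp
  then have "(1 + 2 * lam * s 1) * - Jinv $$ (0, 0) \<le> 3 * - Jinv $$ (0, 0)"
    using nonpos[OF \<open>0 < b\<close> \<open>0 < b\<close>] by (intro mult_right_mono) auto
  then have "1 \<le> 3 * - Jinv $$ (0, 0)"
    using diag[OF \<open>0 < b\<close>] by simp
  moreover have "Jinv $$ (i, i) < 0" if "i < b" for i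
  proof -
    have "Jinv $$ (i, i) \<noteq> 0" using diag[OF that] by auto
    then show ?thesis using nonpos[OF that that] by simp
  qed
  ultimately show ?thesis by auto
qed

end
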